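(* There exist a connected analytic submanifold $S$ of $\mathbb{R}^2$ and $P\in\mathbb{R}[x_1,x_2;x_3]$ of degree $4$ in $x_3$ such that: (1) $P$ never nullifies on $S$; (2) $\mathrm{Disc}^4_{x_3}(P)$ is not the zero polynomial and is order-invariant on $S$; (3) $P$ is not projectively delineable over $S$. For instance, one may take $S=\{(x_1,x_2): x_1^2+x_2^2=1\}$ and $P=(1-x_1)x_3^4+4x_2x_3^3+(2+6x_1)x_3^2-4x_2x_3+(1-x_1)$.
   Context: For $\mathbf{x}_0\in\mathbb{R}^2$, $E_{\mathbf{x}_0}P$ is the univariate polynomial in $x_3$ obtained by substituting $\mathbf{x}_0$ for $(x_1,x_2)$; "$P$ never nullifies on $S$" means $E_{\mathbf{x}}P\ne0$ for all $\mathbf{x}\in S$. $\mathrm{Disc}^4_{x_3}(P)\in\mathbb{R}[x_1,x_2]$ is the discriminant of $P$ with respect to $x_3$ for formal degree $4$. For a polynomial $f$ and point $v$, $\mathrm{ord}(f,v)$ is the least total order of a partial derivative of $f$ nonzero at $v$; order-invariant on $S$ means constant order on $S$. $\mathbb{RP}^1$ is the quotient of $\mathbb{R}^2\setminus\{(0,0)\}$ by proportionality with the quotient topology; $(u:v)$ is the class of $(u,v)$. $H^4(P)(\mathbf{x},x_3,y)=\sum_{k=0}^4c_k(\mathbf{x})x_3^ky^{4-k}$ for $P=\sum_kc_k(\mathbf{x})x_3^k$. A projective root of a binary form $g(u,v)$ is $(u_0:v_0)$ with $g(u_0,v_0)=0$, with multiplicity (for $g\ne0$) the largest $m$ with $(v_0u-u_0v)^m\mid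 g$. $Z_{\mathbb{RP}^1}(P,S)=\{(\mathbf{x},(x_3:y))\in S\times\mathbb{RP}^1:H^4(P)(\mathbf{x},x_3,y)=0\}$. $P$ is projectively delineable on $S$ if there are $k\in\mathbb{N}$ and continuous $\theta_1,\dots,\theta_k:S\to\mathbb{RP}^1$ such that $Z_{\mathbb{RP}^1}(P,S)$ is the disjoint union of their graphs and, for each $l$, there is $m_l\ge1$ with $\theta_l(\mathbf{x})$ a projective root of $E_{\mathbf{x}}H^4(P)$ of multiplicity $m_l$ for all $\mathbf{x}\in S$. *)

theory Defs
  imports "HOL-Analysis.Analysis" "Subresultants.Resultant_Prelim"
begin

text \<open>A polynomial in R[x1,x2] is a "real poly poly": the inner variable is x1, the
  outer variable is x2.  A polynomial in R[x1,x2;x3] is a "real poly poly poly" whose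
  outer variable is x3 and whose coefficients c_k lie in R[x1,x2].\<close>

definition eval2 :: "real poly poly \<Rightarrow> real \<times> real \<Rightarrow> real" where
  "eval2 q x = poly (poly q [:snd x:]) (fst x)"

definition evalE :: "real poly poly poly \<Rightarrow> real \<times> real \<Rightarrow> real poly" where
  "evalE P x = map_poly (\<lambda>c. eval2 c x) P"

definition never_nullifies :: "real poly poly poly \<Rightarrow> (real \<times> real) set \<Rightarrow> bool" where
  "never_nullifies P S \<longleftrightarrow> (\<forall>x\<in>S. evalE P x \<noteq> 0)"

text \<open>Discriminant w.r.t. x3 for formal degree 4:
  a_4 * Disc = (-1)^(4*3/2) * Res_{4,3}(P, dP/dx3) with (-1)^6 = 1.\<close>
definition Disc4 :: "real poly poly poly \<Rightarrow> real poly poly" where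
  "Disc4 P = resultant_sub 4 3 P (pderiv P) div coeff P 4"

definition pdiff :: "nat \<Rightarrow> nat \<Rightarrow> real poly poly \<Rightarrow> real poly poly" where
  "pdiff i j q = ((map_poly pderiv) ^^ i) ((pderiv ^^ j) q)"

definition ord2 :: "real poly poly \<Rightarrow> real \<times> real \<Rightarrow> nat" where
  "ord2 f v = (LEAST n. \<exists>i j. i + j = n \<and> eval2 (pdiff i j f) v \<noteq> 0)"

definition order_invariant :: "real poly poly \<Rightarrow> (real \<times> real) set \<Rightarrow> bool" where
  "order_invariant f S \<longleftrightarrow> (\<exists>n. \<forall>v\<in>S. ord2 f v = n)"

definition real_analytic_on :: "(real \<times> real) set \<Rightarrow> (real \<times> real \<Rightarrow> real) \<Rightarrow> bool" where
  "real_analytic_on U f \<longleftrightarrow>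
     (\<forall>p\<in>U. \<exists>r>0. \<exists>a :: nat \<Rightarrow> nat \<Rightarrow> real. \<forall>x\<in>ball p r.
        ((\<lambda>(i, j). a i j * (fst x - fst p) ^ i * (snd x - snd p) ^ j) has_sum f x) UNIV)"

definition analytic_submanifold :: "(real \<times> real) set \<Rightarrow> bool" where
  "analytic_submanifold S \<longleftrightarrow>
     (\<exists>d::nat. d \<le> 2 \<and> (\<forall>p\<in>S. \<exists>U. open U \<and> p \<in> U \<and>
        ((d = 2 \<and> S \<inter> U = U) \<or>
         (d = 1 \<and> (\<exists>f f'. real_analytic_on U f \<and> (f has_derivative f') (at p) \<and>
                     f' \<noteq> (\<lambda>_. 0) \<and> S \<inter> U = {x\<in>U. f x = 0})) \<or>
         (d = 0 \<and> S \<inter> U = {p}))))"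

definition proj_cls :: "real \<times> real \<Rightarrow> (real \<times> real) set" where
  "proj_cls p = {q. \<exists>t. t \<noteq> 0 \<and> q = t *\<^sub>R p}"

definition RP1 :: "(real \<times> real) set set" where
  "RP1 = proj_cls ` (UNIV - {0})"

definition RP1_top :: "(real \<times> real) set topology" where
  "RP1_top = topology (\<lambda>V. V \<subseteq> RP1 \<and> openin (subtopology euclidean (UNIV - {0})) (\<Union>V))"

text \<open>E_x H^4(P) as a binary form in (u,v) = (x3,y), represented as a bivariate
  polynomial with inner variable u and outer variable v.\<close>
definition homog4 :: "real poly poly poly \<Rightarrow> real \<times> real \<Rightarrow> real poly poly" where
  "homog4 P x = (\<Sum>k\<le>4. monom (monom (eval2 (coeff P k) x) k) (4 - k))"

definition proj_root :: "real poly poly \<Rightarrow> real \<times> real \<Rightarrow> bool" where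
  "proj_root g p \<longleftrightarrow> p \<noteq> 0 \<and> eval2 g p = 0"

text \<open>the linear form v0*u - u0*v\<close>
definition linform :: "real \<times> real \<Rightarrow> real poly poly" where
  "linform p = [: monom (snd p) 1, [: - fst p :] :]"

definition proj_root_mult :: "real poly poly \<Rightarrow> real \<times> real \<Rightarrow> nat \<Rightarrow> bool" where
  "proj_root_mult g p m \<longleftrightarrow> g \<noteq> 0 \<and> proj_root g p \<and>
     linform p ^ m dvd g \<and> \<not> linform p ^ (Suc m) dvd g"

definition Z_RP1 :: "real poly poly poly \<Rightarrow> (real \<times> real) set \<Rightarrow>
    ((real \<times> real) \<times> (real \<times> real) set) set" where
  "Z_RP1 P S = {(x, c). x \<in> S \<and> c \<in> RP1 \<and> (\<exists>p\<in>c. eval2 (homog4 P x) p = 0)}"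

definition proj_delineable :: "real poly poly poly \<Rightarrow> (real \<times> real) set \<Rightarrow> bool" where
  "proj_delineable P S \<longleftrightarrow>
     (\<exists>k::nat. \<exists>\<theta> :: nat \<Rightarrow> real \<times> real \<Rightarrow> (real \<times> real) set. \<exists>m :: nat \<Rightarrow> nat.
        (\<forall>l<k. continuous_map (subtopology euclidean S) RP1_top (\<theta> l)) \<and>
        (\<forall>l<k. \<forall>x\<in>S. \<theta> l x \<in> RP1) \<and>
        Z_RP1 P S = (\<Union>l<k. {(x, \<theta> l x) | x. x \<in> S}) \<and>
        (\<forall>l<k. \<forall>l'<k. l \<noteq> l' \<longrightarrow> (\<forall>x\<in>S. \<theta> l x \<noteq> \<theta> l' x)) \<and>
        (\<forall>l<k. m l \<ge> 1 \<and> (\<forall>x\<in>S. \<forall>p\<in>\<theta> l x. proj_root_mult (homog4 P x) p (m l))))"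

lemma proj_cls_eq: "q \<in> proj_cls p \<Longrightarrow> proj_cls q = proj_cls p"
proof -
  assume "q \<in> proj_cls p"
  then obtain t where t: "t \<noteq> 0" "q = t *\<^sub>R p" unfolding proj_cls_def by blast
  show ?thesis
  proof
    show "proj_cls q \<subseteq> proj_cls p"
    proof
      fix r assume "r \<in> proj_cls q"
      then obtain s where s: "s \<noteq> 0" "r = s *\<^sub>R q" unfolding proj_cls_def by blast
      have "r = (s * t) *\<^sub>R p" using s t by simp
      moreover have "s * t \<noteq> 0" using s t by simp
      ultimately show "r \<in> proj_cls p" unfolding proj_cls_def by blast
    qed
    show "proj_cls p \<subseteq> proj_cls q"
    proof
      fix r assume "r \<in> proj_cls p"
      then obtain s where s: "s \<noteq> 0" "r = s *\<^sub>R p" unfolding proj_cls_def by blast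
      have "r = (s / t) *\<^sub>R q" using s t by simp
      moreover have "s / t \<noteq> 0" using s t by simp
      ultimately show "r \<in> proj_cls q" unfolding proj_cls_def by blast
    qed
  qed
qed

lemma proj_cls_disj: "c \<in> RP1 \<Longrightarrow> d \<in> RP1 \<Longrightarrow> q \<in> c \<Longrightarrow> q \<in> d \<Longrightarrow> c = d"
proof -
  assume h: "c \<in> RP1" "d \<in> RP1" "q \<in> c" "q \<in> d"
  then obtain a b where ab: "c = proj_cls a" "d = proj_cls b" unfolding RP1_def by blast
  have "proj_cls q = c" using ab h(3) proj_cls_eq by simp
  moreover have "proj_cls q = d" using ab h(4) proj_cls_eq by simp
  ultimately show "c = d" by simp
qed

lemma Union_Int_RP1:
  assumes "S \<subseteq> RP1" "T \<subseteq> RP1"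
  shows "\<Union>(S \<inter> T) = \<Union>S \<inter> \<Union>T"
proof
  show "\<Union>(S \<inter> T) \<subseteq> \<Union>S \<inter> \<Union>T" by (rule Union_Int_subset)
  show "\<Union>S \<inter> \<Union>T \<subseteq> \<Union>(S \<inter> T)"
  proof
    fix q assume "q \<in> \<Union>S \<inter> \<Union>T"
    then obtain c d where cd: "c \<in> S" "d \<in> T" "q \<in> c" "q \<in> d" by blast
    have "c \<in> RP1" "d \<in> RP1" using cd(1,2) assms by (auto simp only: subset_iff)
    then have "c = d" using cd(3,4) by (rule proj_cls_disj)
    then have "c \<in> S \<inter> T" using cd(1,2) by simp
    then show "q \<in> \<Union>(S \<inter> T)" using cd(3) by (rule UnionI)
  qed
qed

lemma istopology_RP1: "istopology (\<lambda>V. V \<subseteq> RP1 \<and> openin (subtopology euclidean (UNIV - {0})) (\<Union>V))"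
proof -
  have f1: "S \<inter> T \<subseteq> RP1 \<and> openin (subtopology euclidean (UNIV - {0})) (\<Union>(S \<inter> T))"
    if a: "S \<subseteq> RP1 \<and> openin (subtopology euclidean (UNIV - {0})) (\<Union>S)"
     and b: "T \<subseteq> RP1 \<and> openin (subtopology euclidean (UNIV - {0})) (\<Union>T)"
    for S T :: "(real\<times>real) set set"
  proof -
    have e: "\<Union>(S \<inter> T) = \<Union>S \<inter> \<Union>T"
      using a b by (intro Union_Int_RP1) simp_all
    have "openin (subtopology euclidean (UNIV - {0})) (\<Union>S \<inter> \<Union>T)"
      using a b by (intro openin_Int) simp_all
    then have o: "openin (subtopology euclidean (UNIV - {0})) (\<Union>(S \<inter> T))"
      by (simp only: e)
    have s: "S \<inter> T \<subseteq> RP1" using a by (intro le_infI1) simp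
    show ?thesis using s o by simp
  qed
  have f2: "\<Union>K \<subseteq> RP1 \<and> openin (subtopology euclidean (UNIV - {0})) (\<Union>(\<Union>K))"
    if h: "\<forall>S\<in>K. S \<subseteq> RP1 \<and> openin (subtopology euclidean (UNIV - {0})) (\<Union>S)"
    for K :: "(real\<times>real) set set set"
  proof -
    have e: "\<Union>(\<Union>K) = \<Union>(Union ` K)" by auto
    have "openin (subtopology euclidean (UNIV - {0})) (\<Union>(Union ` K))"
      using h by (intro openin_Union) auto
    then have o: "openin (subtopology euclidean (UNIV - {0})) (\<Union>(\<Union>K))" by (simp only: e)
    have s: "\<Union>K \<subseteq> RP1" using h by (intro Union_least) simp
    show ?thesis using s o by simp
  qed
  show ?thesis unfolding istopology_def using f1 f2 by blast
qed

lemma openin_RP1_top: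
  "openin RP1_top = (\<lambda>V. V \<subseteq> RP1 \<and> openin (subtopology euclidean (UNIV - {0})) (\<Union>V))"
  unfolding RP1_top_def by (rule topology_inverse'[OF istopology_RP1])

end

theory Submission
  imports Defs
begin

(* Take S = R^2 - {0} and P = x1 x3^4 + 4 x2 x3^3 - 6 x1 x3^2 - 4 x2 x3 + x1.  Identifying
   (x1,x2) and (x3,y) with complex numbers a and z, the homogenization of P is Re (cnj a * z^4),
   and a 7x7 determinant computation gives Disc P = 16384 (x1^2 + x2^2)^3, which vanishes nowhere
   on S, so it has order 0 throughout.  A projective root (x3:y) of H(P) at a point a of the unit
   circle satisfies (z^2 / |z|^2)^4 = - a^2.  Since z^2 / |z|^2 is invariant under real scaling,
   it is a continuous function on RP^1, so a continuous root section over S would give a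
   continuous fourth root of - a^2 along the unit circle.  There is none: after one turn such a
   root comes back with the opposite sign. *)

definition del_nth :: "nat \<Rightarrow> 'a list \<Rightarrow> 'a list" where
  "del_nth j xs = take j xs @ drop (Suc j) xs"

lemma length_del_nth: "j < length xs \<Longrightarrow> length (del_nth j xs) = length xs - 1"
  unfolding del_nth_def by auto

lemma nth_del_nth:
  "j < length xs \<Longrightarrow> k < length xs - 1 \<Longrightarrow> del_nth j xs ! k = xs ! (if k < j then k else Suc k)"
  unfolding del_nth_def by (auto simp: nth_append min_def)

(* None marks an entry known to be zero: its minor is never expanded, which keeps the symbolic
   evaluation of a sparse determinant by simp feasible. *)
function laplace_det :: "'a::comm_ring_1 option list list \<Rightarrow> 'a" where
  "laplace_det [] = 1"
| "laplace_det (r # rs) = (\<Sum>j\<leftarrow>[0..<length r].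
     case r ! j of None \<Rightarrow> 0 | Some a \<Rightarrow> (-1)^j * a * laplace_det (map (del_nth j) rs))"
  by pat_completeness auto
termination by (relation "Wellfounded.measure length") auto

lemma laplace_det_eq_det:
  assumes "length M = n" "\<forall>r\<in>set M. length r = n"
  shows "laplace_det M = det (mat n n (\<lambda>(i,j). case_option 0 id (M ! i ! j)))"
  using assms
proof (induction n arbitrary: M)
  case 0
  then show ?case by (simp add: det_def')
next
  case (Suc n)
  then obtain r rs where M: "M = r # rs" by (cases M) auto
  have lr: "length r = Suc n" and lrs: "length rs = n" and lr2: "\<forall>r'\<in>set rs. length r' = Suc n"
    using Suc.prems M by auto
  let ?A = "mat (Suc n) (Suc n) (\<lambda>(i,j). case_option 0 id (M ! i ! j))"
  have "det ?A = (\<Sum>j<Suc n. ?A $$ (0,j) * cofactor ?A 0 j)"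
    by (rule laplace_expansion_row) auto
  also have "\<dots> = laplace_det (r # rs)"
    unfolding laplace_det.simps lr interv_sum_list_conv_sum_set_nat set_upt atLeast0LessThan
  proof (rule sum.cong[OF refl])
    fix j assume j: "j \<in> {..<Suc n}"
    have "mat_delete ?A 0 j = mat n n (\<lambda>(i,k). case_option 0 id (map (del_nth j) rs ! i ! k))"
      using j lrs lr2 by (intro eq_matI) (auto simp: mat_delete_def M nth_del_nth)
    moreover have "laplace_det (map (del_nth j) rs) =
        det (mat n n (\<lambda>(i,k). case_option 0 id (map (del_nth j) rs ! i ! k)))"
      by (rule Suc.IH) (use j lrs lr2 in \<open>auto simp: length_del_nth\<close>)
    ultimately have "det (mat_delete ?A 0 j) = laplace_det (map (del_nth j) rs)" by simp
    then show "?A $$ (0,j) * cofactor ?A 0 j =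
        (case r ! j of None \<Rightarrow> 0 | Some a \<Rightarrow> (-1)^j * a * laplace_det (map (del_nth j) rs))"
      using j unfolding cofactor_def by (auto simp: M split: option.split)
  qed
  finally show ?case using M by simp
qed

definition sylvester_rows_4_3 :: "'a::zero poly \<Rightarrow> 'a poly \<Rightarrow> 'a option list list" where
  "sylvester_rows_4_3 p q =
    (let a = \<lambda>k. Some (coeff p k); b = \<lambda>k. Some (coeff q k) in
     [[a 4, a 3, a 2, a 1, a 0, None, None],
      [None, a 4, a 3, a 2, a 1, a 0, None],
      [None, None, a 4, a 3, a 2, a 1, a 0],
      [b 3, b 2, b 1, b 0, None, None, None],
      [None, b 3, b 2, b 1, b 0, None, None],
      [None, None, b 3, b 2, b 1, b 0, None],
      [None, None, None, b 3, b 2, b 1, b 0]])"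

lemma resultant_sub_4_3: "resultant_sub 4 3 p q = laplace_det (sylvester_rows_4_3 p q)"
proof -
  let ?A = "mat 7 7 (\<lambda>(i,j). case_option 0 id (sylvester_rows_4_3 p q ! i ! j))"
  have "sylvester_mat_sub 4 3 p q = ?A"
  proof (rule eq_matI)
    fix i j assume "i < dim_row ?A" "j < dim_col ?A"
    then have "i \<in> {0,1,2,3,4,5,6}" "j \<in> {0,1,2,3,4,5,6}" by auto
    then show "sylvester_mat_sub 4 3 p q $$ (i, j) = ?A $$ (i, j)"
      by (auto simp: sylvester_mat_sub_index sylvester_rows_4_3_def)
  qed auto
  then show ?thesis
    unfolding resultant_sub_def
    by (simp only:) (rule laplace_det_eq_det[symmetric]; simp add: sylvester_rows_4_3_def)
qed

lemma resultant_sub_4_3_example: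
  fixes a b :: "'a::comm_ring_1"
  shows "resultant_sub 4 3 [:a, -4*b, -6*a, 4*b, a:] [:-4*b, -12*a, 12*b, 4*a:]
       = a * (16384 * (a^2 + b^2)^3)"
  unfolding resultant_sub_4_3
  by (simp add: sylvester_rows_4_3_def del_nth_def upt_rec eval_nat_numeral
      algebra_simps power2_eq_square power3_eq_cube)

lemma eval2_arith [simp]:
  "eval2 (p + q) x = eval2 p x + eval2 q x"
  "eval2 (p * q) x = eval2 p x * eval2 q x"
  "eval2 (- p) x = - eval2 p x"
  "eval2 (p ^ n) x = eval2 p x ^ n"
  "eval2 (numeral k) x = numeral k"
  "eval2 0 x = 0"
  "eval2 1 x = 1"
  by (simp_all add: eval2_def poly_power)

lemma eval2_homog4:
  "eval2 (homog4 P x) p = (\<Sum>k\<le>4. eval2 (coeff P k) x * fst p ^ k * snd p ^ (4 - k))"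
  by (simp add: homog4_def eval2_def poly_sum poly_monom)

lemma ord2_eq_0: "eval2 f v \<noteq> 0 \<Longrightarrow> ord2 f v = 0"
  unfolding ord2_def by (intro Least_eq_0) (auto simp: pdiff_def)

lemma order_invariant_if_nonvanishing:
  assumes "\<And>v. v \<in> S \<Longrightarrow> eval2 f v \<noteq> 0"
  shows "order_invariant f S"
  unfolding order_invariant_def using assms ord2_eq_0 by blast

lemma analytic_submanifold_if_open: "open S \<Longrightarrow> analytic_submanifold S"
  unfolding analytic_submanifold_def by (intro exI[of _ 2]) auto

lemma proj_cls_in_RP1: "p \<noteq> 0 \<Longrightarrow> proj_cls p \<in> RP1"
  by (simp add: RP1_def)

lemma self_in_proj_cls: "p \<in> proj_cls p"
  unfolding proj_cls_def by (auto intro: exI[of _ 1])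

lemma RP1_eq_proj_cls: "c \<in> RP1 \<Longrightarrow> p \<in> c \<Longrightarrow> c = proj_cls p"
  unfolding RP1_def using proj_cls_eq by blast

lemma RP1_nonempty: "c \<in> RP1 \<Longrightarrow> \<exists>p. p \<in> c"
  unfolding RP1_def using self_in_proj_cls by auto

lemma RP1_mem_nonzero: "c \<in> RP1 \<Longrightarrow> p \<in> c \<Longrightarrow> p \<noteq> 0"
  unfolding RP1_def proj_cls_def by (auto simp: zero_prod_def)

lemma topspace_RP1_top: "topspace RP1_top = RP1"
proof -
  have "\<Union>RP1 = UNIV - {0}"
    using RP1_mem_nonzero proj_cls_in_RP1 self_in_proj_cls by blast
  then have "openin RP1_top RP1"
    unfolding openin_RP1_top by simp
  then show ?thesis
    using openin_subset by (force simp: topspace_def openin_RP1_top)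
qed

definition RP1_induced :: "(real \<times> real \<Rightarrow> 'a) \<Rightarrow> (real \<times> real) set \<Rightarrow> 'a" where
  "RP1_induced f c = f (SOME p. p \<in> c)"

lemma RP1_induced_eq:
  assumes f: "\<And>t p. t \<noteq> 0 \<Longrightarrow> f (t *\<^sub>R p) = f p" and c: "c \<in> RP1" "p \<in> c"
  shows "RP1_induced f c = f p"
proof -
  have "(SOME p. p \<in> c) \<in> proj_cls p"
    using c RP1_eq_proj_cls someI[of "\<lambda>q. q \<in> c"] by blast
  then obtain t where "t \<noteq> 0" "(SOME p. p \<in> c) = t *\<^sub>R p"
    unfolding proj_cls_def by blast
  then show ?thesis
    unfolding RP1_induced_def using f by metis
qed

lemma continuous_map_RP1_induced:
  assumes f: "\<And>t p. t \<noteq> 0 \<Longrightarrow> f (t *\<^sub>R p) = f p" and cont: "continuous_on (UNIV - {0}) f"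
  shows "continuous_map RP1_top euclidean (RP1_induced f)"
  unfolding continuous_map topspace_RP1_top
proof (intro conjI allI impI)
  fix U :: "'a set" assume "openin euclidean U"
  have "\<Union>{c \<in> RP1. RP1_induced f c \<in> U} = (UNIV - {0}) \<inter> f -` U"
  proof (intro equalityI subsetI)
    fix p assume "p \<in> \<Union>{c \<in> RP1. RP1_induced f c \<in> U}"
    then obtain c where "c \<in> RP1" "p \<in> c" "RP1_induced f c \<in> U"
      by blast
    then show "p \<in> (UNIV - {0}) \<inter> f -` U"
      using RP1_induced_eq[OF f] RP1_mem_nonzero by auto
  next
    fix p assume "p \<in> (UNIV - {0}) \<inter> f -` U"
    then have "p \<noteq> 0" "f p \<in> U"
      by auto
    then show "p \<in> \<Union>{c \<in> RP1. RP1_induced f c \<in> U}"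
    proof (intro UnionI[of "proj_cls p"])
      show "proj_cls p \<in> {c \<in> RP1. RP1_induced f c \<in> U}"
        using RP1_induced_eq[OF f proj_cls_in_RP1 self_in_proj_cls] proj_cls_in_RP1
          \<open>p \<noteq> 0\<close> \<open>f p \<in> U\<close>
        by simp
    qed (rule self_in_proj_cls)
  qed
  moreover have "openin (top_of_set (UNIV - {0})) ((UNIV - {0}) \<inter> f -` U)"
    using continuous_openin_preimage_gen[OF cont] \<open>openin euclidean U\<close> by simp
  ultimately show "openin RP1_top {c \<in> RP1. RP1_induced f c \<in> U}"
    unfolding openin_RP1_top by auto
qed auto

lemma proj_delineable_imp_continuous_root:
  assumes "proj_delineable P S" and "Z_RP1 P S \<noteq> {}"
  obtains \<theta> where "continuous_map (top_of_set S) RP1_top \<theta>"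
    and "\<And>x p. x \<in> S \<Longrightarrow> p \<in> \<theta> x \<Longrightarrow> p \<noteq> 0 \<and> eval2 (homog4 P x) p = 0"
    and "\<And>x. x \<in> S \<Longrightarrow> \<theta> x \<in> RP1"
proof -
  from assms(1) obtain k :: nat and \<theta> m where
    cont: "\<forall>l<k. continuous_map (top_of_set S) RP1_top (\<theta> l)" and
    RP1: "\<forall>l<k. \<forall>x\<in>S. \<theta> l x \<in> RP1" and
    Z: "Z_RP1 P S = (\<Union>l<k. {(x, \<theta> l x) | x. x \<in> S})" and
    mult: "\<forall>l<k. m l \<ge> 1 \<and> (\<forall>x\<in>S. \<forall>p\<in>\<theta> l x. proj_root_mult (homog4 P x) p (m l))"
    unfolding proj_delineable_def by (elim exE conjE) (rule that; assumption)
  obtain l where "l < k"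
    using assms(2) unfolding Z by blast
  show ?thesis
  proof (rule that)
    show "continuous_map (top_of_set S) RP1_top (\<theta> l)"
      using cont \<open>l < k\<close> by blast
    show "\<theta> l x \<in> RP1" if "x \<in> S" for x
      using RP1 \<open>l < k\<close> that by blast
    show "p \<noteq> 0 \<and> eval2 (homog4 P x) p = 0" if "x \<in> S" "p \<in> \<theta> l x" for x p
      using mult \<open>l < k\<close> that unfolding proj_root_mult_def proj_root_def by blast
  qed
qed

definition complex_of_pair :: "real \<times> real \<Rightarrow> complex" where
  "complex_of_pair p = of_real (fst p) + \<i> * of_real (snd p)"

definition squared_direction :: "real \<times> real \<Rightarrow> complex" where
  "squared_direction p = complex_of_pair p ^ 2 / of_real (cmod (complex_of_pair p) ^ 2)"

lemma complex_of_pair_eq_0_iff [simp]: "complex_of_pair p = 0 \<longleftrightarrow> p = 0"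
  by (cases p) (simp add: complex_of_pair_def complex_eq_iff zero_prod_def)

lemma complex_of_pair_scaleR: "complex_of_pair (t *\<^sub>R p) = of_real t * complex_of_pair p"
  by (simp add: complex_of_pair_def algebra_simps)

lemma complex_of_pair_cos_sin: "complex_of_pair (cos t, sin t) = cis t"
  by (simp add: complex_of_pair_def complex_eq_iff)

lemma squared_direction_scaleR: "t \<noteq> 0 \<Longrightarrow> squared_direction (t *\<^sub>R p) = squared_direction p"
  by (simp add: squared_direction_def complex_of_pair_scaleR norm_mult power_mult_distrib)

lemma continuous_on_squared_direction: "continuous_on (UNIV - {0}) squared_direction"
  unfolding squared_direction_def complex_of_pair_def
  by (intro continuous_intros) (auto simp flip: complex_of_pair_def)

lemma power4_normalized_square_of_root:
  fixes a z :: complex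
  assumes a: "cmod a = 1" and z: "z \<noteq> 0" and root: "Re (cnj a * z ^ 4) = 0"
  shows "(z ^ 2 / of_real (cmod z ^ 2)) ^ 4 = - (a ^ 2)"
proof -
  define w where "w = cnj a * z ^ 4"
  have "w = \<i> * of_real (Im w)"
    using root by (simp add: w_def complex_eq_iff)
  then have "w ^ 2 = - of_real (cmod w ^ 2)"
    using root by (simp add: w_def cmod_power2 power_mult_distrib)
  also have "cmod w = cmod z ^ 4"
    using a by (simp add: w_def norm_mult norm_power)
  finally have w2: "w ^ 2 = - of_real (cmod z ^ 8)"
    by (simp flip: power_mult)
  have "a * cnj a = 1"
    using a complex_norm_square[of a] by simp
  then have "z ^ 8 = (a * cnj a) ^ 2 * z ^ 8"
    by simp
  also have "\<dots> = a ^ 2 * w ^ 2"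
    by (simp add: w_def power_mult_distrib mult_ac flip: power_mult)
  finally show ?thesis
    using z by (simp add: w2 power_divide flip: power_mult)
qed

lemma continuous_fourth_root_of_neg_cis_antiperiodic:
  fixes g :: "real \<Rightarrow> complex"
  assumes cont: "continuous_on {0..2*pi} g"
    and root: "\<And>t. t \<in> {0..2*pi} \<Longrightarrow> g t ^ 4 = - cis (2 * t)"
  shows "g (2 * pi) = - g 0"
proof -
  define h where "h t = g t * cis (- t / 2)" for t
  have h4: "h t ^ 4 = -1" if "t \<in> {0..2*pi}" for t
  proof -
    have "cis (2 * t) * cis (- t / 2) ^ 4 = 1"
      by (simp add: Complex.DeMoivre cis_mult)
    then show ?thesis
      using root[OF that] by (simp add: h_def power_mult_distrib)
  qed
  have "h t ^ 8 = 1" if "t \<in> {0..2*pi}" for t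
  proof -
    have "h t ^ 8 = (h t ^ 4) ^ 2"
      by (simp flip: power_mult)
    also have "\<dots> = 1"
      using h4[OF that] by simp
    finally show ?thesis .
  qed
  then have "h ` {0..2*pi} \<subseteq> {z. z ^ 8 = 1}"
    by auto
  then have "finite (h ` {0..2*pi})"
    by (rule finite_subset) (simp add: finite_roots_unity)
  moreover have "continuous_on {0..2*pi} h"
    unfolding h_def by (intro continuous_intros cont) auto
  ultimately have "h (2 * pi) = h 0"
    using continuous_finite_range_constant[OF connected_Icc] unfolding constant_on_def
    by (metis atLeastAtMost_iff order.refl pi_ge_zero mult_nonneg_nonneg zero_le_numeral)
  moreover have "cis (- pi) = -1"
    by (simp add: complex_eq_iff)
  ultimately show ?thesis
    by (simp add: h_def minus_equation_iff)
qed

definition X1 :: "real poly poly" where "X1 = [:[:0, 1:]:]"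
definition X2 :: "real poly poly" where "X2 = [:0, 1:]"

lemma eval2_X1 [simp]: "eval2 X1 x = fst x" and eval2_X2 [simp]: "eval2 X2 x = snd x"
  by (simp_all add: eval2_def X1_def X2_def)

lemma X1_nonzero: "X1 \<noteq> 0"
  by (simp add: X1_def)

definition example_poly :: "real poly poly poly" where
  "example_poly = [:X1, -4 * X2, -6 * X1, 4 * X2, X1:]"

lemma degree_example_poly: "degree example_poly = 4"
  by (simp add: example_poly_def X1_nonzero)

lemma Disc4_example_poly: "Disc4 example_poly = 16384 * (X1 ^ 2 + X2 ^ 2) ^ 3"
proof -
  have "pderiv example_poly = [:-4 * X2, -12 * X1, 12 * X2, 4 * X1:]"
    by (simp add: example_poly_def pderiv_pCons algebra_simps)
  then have "resultant_sub 4 3 example_poly (pderiv example_poly)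
      = X1 * (16384 * (X1 ^ 2 + X2 ^ 2) ^ 3)"
    unfolding example_poly_def by (simp only: resultant_sub_4_3_example)
  then show ?thesis
    by (simp add: Disc4_def example_poly_def X1_nonzero eval_nat_numeral)
qed

lemma eval2_Disc4_example_poly: "eval2 (Disc4 example_poly) x = 16384 * (fst x ^ 2 + snd x ^ 2) ^ 3"
  by (simp add: Disc4_example_poly)

lemma Disc4_example_poly_nonvanishing: "x \<noteq> 0 \<Longrightarrow> eval2 (Disc4 example_poly) x \<noteq> 0"
  by (cases x) (simp add: eval2_Disc4_example_poly sum_power2_eq_zero_iff zero_prod_def)

lemma never_nullifies_example_poly: "never_nullifies example_poly (UNIV - {0})"
  unfolding never_nullifies_def
proof
  fix x :: "real \<times> real"
  assume "x \<in> UNIV - {0}"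
  then have "fst x \<noteq> 0 \<or> snd x \<noteq> 0"
    by (simp add: prod_eq_iff)
  moreover have "coeff (evalE example_poly x) 4 = fst x" "coeff (evalE example_poly x) 3 = 4 * snd x"
    by (simp_all add: evalE_def coeff_map_poly example_poly_def eval_nat_numeral)
  ultimately show "evalE example_poly x \<noteq> 0"
    by auto
qed

lemma eval2_homog4_example_poly:
  "eval2 (homog4 example_poly x) p = Re (cnj (complex_of_pair x) * complex_of_pair p ^ 4)"
  by (simp add: eval2_homog4 example_poly_def complex_of_pair_def eval_nat_numeral algebra_simps)

lemma squared_direction_root_example_poly:
  assumes "p \<noteq> 0" and "eval2 (homog4 example_poly (cos t, sin t)) p = 0"
  shows "squared_direction p ^ 4 = - cis (2 * t)"
proof -
  have "squared_direction p ^ 4 = - (cis t ^ 2)"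
    using assms unfolding squared_direction_def eval2_homog4_example_poly complex_of_pair_cos_sin
    by (intro power4_normalized_square_of_root) auto
  then show ?thesis
    by (simp add: Complex.DeMoivre)
qed

lemma not_proj_delineable_example_poly: "\<not> proj_delineable example_poly (UNIV - {0})"
proof
  let ?S = "UNIV - {0 :: real \<times> real}"
  assume delineable: "proj_delineable example_poly ?S"
  have "eval2 (homog4 example_poly (0, 1)) (1, 0) = 0"
    by (simp add: eval2_homog4_example_poly complex_of_pair_def)
  then have "((0, 1), proj_cls (1, 0)) \<in> Z_RP1 example_poly ?S"
    unfolding Z_RP1_def using proj_cls_in_RP1[of "(1, 0)"] self_in_proj_cls[of "(1, 0)"]
    by (auto simp: zero_prod_def)
  then have "Z_RP1 example_poly ?S \<noteq> {}"
    by blast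
  with delineable obtain \<theta> where cont: "continuous_map (top_of_set ?S) RP1_top \<theta>"
    and root: "\<And>x p. x \<in> ?S \<Longrightarrow> p \<in> \<theta> x \<Longrightarrow> p \<noteq> 0 \<and> eval2 (homog4 example_poly x) p = 0"
    and RP1: "\<And>x. x \<in> ?S \<Longrightarrow> \<theta> x \<in> RP1"
    using proj_delineable_imp_continuous_root by blast
  define g where "g t = RP1_induced squared_direction (\<theta> (cos t, sin t))" for t
  have circle: "(cos t, sin t) \<in> ?S" for t
    by (metis DiffI UNIV_I complex_of_pair_eq_0_iff complex_of_pair_cos_sin cis_neq_zero singletonD)
  have "continuous_map (top_of_set ?S) euclidean (RP1_induced squared_direction \<circ> \<theta>)"
    using cont continuous_map_RP1_induced[OF squared_direction_scaleR continuous_on_squared_direction]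
    by (rule continuous_map_compose)
  then have "continuous_on ?S (\<lambda>x. RP1_induced squared_direction (\<theta> x))"
    by (simp add: o_def)
  then have "continuous_on {0..2*pi} g"
    unfolding g_def by (rule continuous_on_compose2) (auto intro!: continuous_intros circle)
  moreover have g4: "g t ^ 4 = - cis (2 * t)" for t
  proof -
    obtain p where p: "p \<in> \<theta> (cos t, sin t)"
      using RP1_nonempty RP1 circle by blast
    then show ?thesis
      using RP1_induced_eq[OF squared_direction_scaleR RP1[OF circle] p] root[OF circle p]
      by (simp add: g_def squared_direction_root_example_poly)
  qed
  ultimately have "g (2 * pi) = - g 0"
    by (rule continuous_fourth_root_of_neg_cis_antiperiodic)
  then have "g 0 = 0"
    by (simp add: g_def)
  then show False
    using g4[of 0] by simp
qed

theorem mainTheorem10: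
  shows "\<exists>(S :: (real \<times> real) set) (P :: real poly poly poly).
           connected S \<and> analytic_submanifold S \<and> degree P = 4 \<and>
           never_nullifies P S \<and>
           Disc4 P \<noteq> 0 \<and> order_invariant (Disc4 P) S \<and>
           \<not> proj_delineable P S"
proof (intro exI conjI)
  show "connected (UNIV - {0 :: real \<times> real})"
    using connected_punctured_universe[of "0 :: real \<times> real"] by (simp add: Compl_eq_Diff_UNIV)
  show "analytic_submanifold (UNIV - {0 :: real \<times> real})"
    by (rule analytic_submanifold_if_open) auto
  show "degree example_poly = 4"
    by (rule degree_example_poly)
  show "never_nullifies example_poly (UNIV - {0})"
    by (rule never_nullifies_example_poly)
  show "Disc4 example_poly \<noteq> 0"
    using Disc4_example_poly_nonvanishing[of "(1, 0)"] by (auto simp: zero_prod_def)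
  show "order_invariant (Disc4 example_poly) (UNIV - {0})"
    by (rule order_invariant_if_nonvanishing) (simp add: Disc4_example_poly_nonvanishing)
  show "\<not> proj_delineable example_poly (UNIV - {0})"
    by (rule not_proj_delineable_example_poly)
qed

end
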